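(* Let $f^{\mathrm{lgt}}:\mathcal{X}\to\mathbb{R}^K$ satisfy $\|f^{\mathrm{lgt}}(x)\|_2\le L_f$ for all $x$, and let $\mathcal{L}_{\mathrm{calib}}:\mathbb{R}^K\times\mathbb{R}^K\to[0,1]$ be $L_c$-Lipschitz in its second argument. Let $\alpha_-\le\alpha_+$ and $\mathcal{A}'=\{\boldsymbol\alpha=(\alpha_1,\dots,\alpha_K):\ \alpha_-\le\alpha_j\le\alpha_+\ \forall j\}$. Given $n$ i.i.d. validation samples $\mathcal{S}=(X_i,Y_i)_{i=1}^n\sim\mathcal{D}$, let $\boldsymbol\alpha^\star\in\arg\min_{\boldsymbol\alpha\in\mathcal{A}'}\mathcal{L}_{\mathrm{calib}}(\boldsymbol\alpha,\mathcal{S})$ (equivalently, each $\alpha_k^\star$ minimizes the empirical calibration loss over $\mathcal{S}_k=\{(X_i,Y_i)\in\mathcal{S}:\hat Y_i=k\}$). Let $\mathcal{D}_k$ be the conditional distribution of $(X,Y)$ given $\hat Y=k$ and $p_{\min}=\min_{1\le k\le K}\mathbb{P}(\hat Y=k)$. Then with probability at least $1-K(\delta+e^{-p_{\min}n/8})$, for all $1\le k\le K$, $$\mathcal{L}_{\mathrm{calib}}(\alpha_k^\star,\mathcal{D}_k)\le\min_{\alpha_-\le\alpha\le\alpha_+}\mathcal{L}_{\mathrm{calib}}(\alpha,\mathcal{D}_k)+6\sqrt{\frac{\log(1+4(\alpha_+-\alpha_-)\sqrt nL_fL_c)}{p_{\min}n}}+12\sqrt{\frac{\log(2/\delta)}{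p_{\min}n}}.$$
   Context: Multiclass setup: $X\in\mathcal{X}$, $Y\in\{1,\dots,K\}$, $(X,Y)\sim\mathcal{D}$; classifier $f(X)=\mathrm{softmax}(f^{\mathrm{lgt}}(X))$ with predicted label $\hat Y=\arg\max_kf(X)_k$; temperature-scaled classifier $f_\alpha(X)=\mathrm{softmax}(\alpha f^{\mathrm{lgt}}(X))$; $Y$ is viewed as a vector in $\mathbb{R}^K$ inside $\mathcal{L}_{\mathrm{calib}}(Y,\cdot)$. Empirical loss $\mathcal{L}_{\mathrm{calib}}(\boldsymbol\alpha,\mathcal{S})=\frac1n\sum_{i=1}^n\mathcal{L}_{\mathrm{calib}}(Y_i,f_{\alpha_{\hat Y_i}}(X_i))$; for a scalar $\alpha$, $\mathcal{L}_{\mathrm{calib}}(\alpha,\mathcal{D}_k)=\mathbb{E}[\mathcal{L}_{\mathrm{calib}}(Y,f_\alpha(X))\mid\hat Y=k]$. *)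

theory Defs
  imports "HOL-Probability.Probability"
begin

text \<open>Labels are elements of a finite type 'k, so K = CARD('k); logits live in real^'k
  (whose norm is the Euclidean 2-norm).\<close>

definition softmax :: "real^'k \<Rightarrow> real^'k" where
  "softmax v = (\<chi> i. exp (v $ i) / (\<Sum>j\<in>UNIV. exp (v $ j)))"

definition onehot :: "'k \<Rightarrow> real^'k" where
  "onehot y = (\<chi> j. if j = y then 1 else 0)"

definition temp_scaled :: "('x \<Rightarrow> real^'k) \<Rightarrow> real \<Rightarrow> 'x \<Rightarrow> real^'k" where
  "temp_scaled flgt a x = softmax (a *\<^sub>R flgt x)"

definition emp_calib_loss ::
  "(real^'k \<Rightarrow> real^'k \<Rightarrow> real) \<Rightarrow> ('x \<Rightarrow> real^'k) \<Rightarrow> ('x \<Rightarrow> 'k) \<Rightarrow> nat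
     \<Rightarrow> (nat \<Rightarrow> 'x \<times> 'k) \<Rightarrow> real^'k \<Rightarrow> real" where
  "emp_calib_loss Lcal flgt hat n S alpha =
     (1 / real n) * (\<Sum>i<n. Lcal (onehot (snd (S i)))
                              (temp_scaled flgt (alpha $ hat (fst (S i))) (fst (S i))))"

definition cond_calib_loss ::
  "(real^'k \<Rightarrow> real^'k \<Rightarrow> real) \<Rightarrow> ('x \<Rightarrow> real^'k) \<Rightarrow> ('x \<Rightarrow> 'k)
     \<Rightarrow> ('x \<times> 'k) measure \<Rightarrow> 'k \<Rightarrow> real \<Rightarrow> real" where
  "cond_calib_loss Lcal flgt hat D k a =
     (\<integral>z\<in>{z\<in>space D. hat (fst z) = k}. Lcal (onehot (snd z)) (temp_scaled flgt a (fst z)) \<partial>D)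
       / measure D {z\<in>space D. hat (fst z) = k}"

definition p_min :: "('x \<Rightarrow> 'k::finite) \<Rightarrow> ('x \<times> 'k) measure \<Rightarrow> real" where
  "p_min hat D = Min (range (\<lambda>k. measure D {z\<in>space D. hat (fst z) = k}))"

end

theory Submission
  imports Defs
begin

text \<open>For a fixed class \<open>k\<close>, the contribution of the class-\<open>k\<close> samples to the empirical loss
  is, as a function of the temperature \<open>t\<close>, Lipschitz with constant \<open>2 L\<^sub>f L\<^sub>c\<close> per sample, because
  \<open>t \<mapsto> softmax (t v)\<close> moves at speed at most \<open>2 \<parallel>v\<parallel>\<close>; the conditional risk is Lipschitz with the
  same constant. It therefore suffices to control the deviations on a grid \<open>T\<close> of at most
  \<open>1 + 4 (\<alpha>\<^sub>+ - \<alpha>\<^sub>-) \<surd>n L\<^sub>f L\<^sub>c\<close> temperatures, which is a \<open>1/(2\<surd>n)\<close>-net for these functions.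
  The moment generating function of a \<open>[0,1]\<close>-valued loss restricted to the event that class \<open>k\<close>
  is predicted, of probability \<open>q\<close>, carries the factor \<open>q\<close> in its exponent, so a Chernoff bound makes the class-\<open>k\<close>
  sum deviate by more than \<open>\<surd>(n q log (2|T|/\<delta>))\<close> with probability at most \<open>\<delta>/|T|\<close>;
  a second Chernoff bound gives class \<open>k\<close> more than \<open>n q / 2\<close> samples except with probability
  \<open>exp (-n p\<^sub>m\<^sub>i\<^sub>n / 8)\<close>. On the remaining event the \<open>k\<close>-th coordinate of an empirical minimiser
  is a near minimiser of the class-\<open>k\<close> risk. Classes too rare for this are covered by the
  trivial bound \<open>1\<close> on the risk, which the rate then exceeds.\<close>

section \<open>Softmax under temperature scaling\<close>

lemma has_derivative_softmax_scaleR: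
  fixes v :: "real^'k"
  defines "Z \<equiv> \<lambda>t. (\<Sum>j\<in>UNIV. exp (t * v $ j))"
  shows "((\<lambda>t. softmax (t *\<^sub>R v)) has_derivative
     (\<lambda>h. h *\<^sub>R (\<chi> i. exp (t * v $ i) / Z t * (v $ i - (\<Sum>j\<in>UNIV. exp (t * v $ j) / Z t * v $ j))))) (at t within S)"
proof -
  have Zpos: "\<And>t. Z t > 0" unfolding Z_def by (intro sum_pos) auto
  have Zd: "(Z has_real_derivative (\<Sum>j\<in>UNIV. v $ j * exp (t * v $ j))) (at t within S)"
    unfolding Z_def by (auto intro!: derivative_eq_intros simp: mult.commute)
  show ?thesis
  proof (subst has_derivative_componentwise_within, intro ballI)
    fix b :: "real^'k" assume "b \<in> Basis"
    then obtain i where b: "b = axis i 1" by (auto simp: Basis_vec_def)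
    have e: "\<And>t. softmax (t *\<^sub>R v) \<bullet> b = exp (t * v $ i) / Z t"
      by (simp add: b inner_axis softmax_def Z_def)
    have "((\<lambda>t. exp (t * v $ i) / Z t) has_real_derivative
        ((v $ i * exp (t * v $ i)) * Z t - exp (t * v $ i) * (\<Sum>j\<in>UNIV. v $ j * exp (t * v $ j))) / (Z t * Z t))
        (at t within S)"
      using Zpos[of t] by (auto intro!: derivative_eq_intros Zd)
    moreover have "((v $ i * exp (t * v $ i)) * Z t - exp (t * v $ i) * (\<Sum>j\<in>UNIV. v $ j * exp (t * v $ j))) / (Z t * Z t)
       = exp (t * v $ i) / Z t * (v $ i - (\<Sum>j\<in>UNIV. exp (t * v $ j) / Z t * v $ j))"
      using Zpos[of t]
      by (simp add: field_simps sum_divide_distrib[symmetric] sum_distrib_left mult_ac)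
    ultimately have d: "((\<lambda>t. exp (t * v $ i) / Z t) has_real_derivative
        exp (t * v $ i) / Z t * (v $ i - (\<Sum>j\<in>UNIV. exp (t * v $ j) / Z t * v $ j))) (at t within S)"
      by simp
    show "((\<lambda>t. softmax (t *\<^sub>R v) \<bullet> b) has_derivative
       (\<lambda>h. (h *\<^sub>R (\<chi> i. exp (t * v $ i) / Z t * (v $ i - (\<Sum>j\<in>UNIV. exp (t * v $ j) / Z t * v $ j)))) \<bullet> b))
       (at t within S)"
      unfolding e
      by (rule has_derivative_eq_rhs[OF d[unfolded has_field_derivative_def]]) (auto simp: fun_eq_iff b inner_axis)
  qed
qed

text \<open>The derivative of \<open>t \<mapsto> softmax (t v)\<close> has components \<open>s\<^sub>i (v\<^sub>i - \<Sum>\<^sub>j s\<^sub>j v\<^sub>j)\<close> for the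
  probability vector \<open>s\<close>; each bracket is at most \<open>2 \<parallel>v\<parallel>\<close> in absolute value.\<close>
lemma norm_softmax_scaleR_diff_le:
  fixes v :: "real^'k"
  shows "norm (softmax (a *\<^sub>R v) - softmax (b *\<^sub>R v)) \<le> 2 * norm v * \<bar>a - b\<bar>"
proof -
  define Z where "Z = (\<lambda>t. (\<Sum>j\<in>UNIV. exp (t * v $ j)))"
  define s where "s = (\<lambda>t i. exp (t * v $ i) / Z t)"
  define w where "w = (\<lambda>t. (\<chi> i. s t i * (v $ i - (\<Sum>j\<in>UNIV. s t j * v $ j))) :: real^'k)"
  have Zpos: "\<And>t. Z t > 0" unfolding Z_def by (intro sum_pos) auto
  have s1: "\<And>t. (\<Sum>i\<in>UNIV. s t i) = 1"
    using Zpos unfolding s_def Z_def by (metis (no_types) less_irrefl sum_divide_distrib divide_self)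
  have s0: "\<And>t i. s t i \<ge> 0" using Zpos by (simp add: s_def less_imp_le)
  have der: "\<And>t. ((\<lambda>t. softmax (t *\<^sub>R v)) has_derivative (\<lambda>h. h *\<^sub>R w t)) (at t within UNIV)"
    using has_derivative_softmax_scaleR[of v] unfolding w_def s_def Z_def by blast
  have wb: "norm (w t) \<le> 2 * norm v" for t
  proof -
    have "\<bar>\<Sum>j\<in>UNIV. s t j * v $ j\<bar> \<le> (\<Sum>j\<in>UNIV. s t j * norm v)"
      by (rule order.trans[OF sum_abs])
        (auto intro!: sum_mono simp: abs_mult s0 mult_left_mono component_le_norm_cart)
    also have "\<dots> = norm v" using s1[of t] by (simp add: sum_distrib_right[symmetric])
    finally have mean: "\<bar>\<Sum>j\<in>UNIV. s t j * v $ j\<bar> \<le> norm v" .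
    have "norm (w t) \<le> (\<Sum>i\<in>UNIV. \<bar>w t $ i\<bar>)" by (rule norm_le_l1_cart)
    also have "\<dots> \<le> (\<Sum>i\<in>UNIV. s t i * (2 * norm v))"
    proof (rule sum_mono)
      fix i
      have "\<bar>v $ i - (\<Sum>j\<in>UNIV. s t j * v $ j)\<bar> \<le> 2 * norm v"
        using mean component_le_norm_cart[of v i] by linarith
      then show "\<bar>w t $ i\<bar> \<le> s t i * (2 * norm v)"
        by (simp add: w_def abs_mult s0 mult_left_mono)
    qed
    also have "\<dots> = 2 * norm v" using s1[of t] by (simp add: sum_distrib_right[symmetric])
    finally show ?thesis .
  qed
  have "norm (softmax (a *\<^sub>R v) - softmax (b *\<^sub>R v)) \<le> (2 * norm v) * norm (a - b)"
  proof (rule differentiable_bound[where S=UNIV and f'="\<lambda>t h. h *\<^sub>R w t"])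
    fix t :: real
    show "onorm (\<lambda>h. h *\<^sub>R w t) \<le> 2 * norm v"
      by (rule onorm_le) (use wb in \<open>auto simp: mult.commute mult_left_mono\<close>)
  qed (use der in auto)
  then show ?thesis by simp
qed

lemma continuous_on_softmax: "continuous_on UNIV (softmax :: real^'k \<Rightarrow> real^'k)"
  unfolding softmax_def
  by (intro continuous_on_vec_lambda continuous_intros) (auto simp: less_imp_neq[symmetric] sum_pos)

lemma exp_le_chord:
  fixes l m x :: real
  assumes "0 \<le> l" "0 \<le> x" "x \<le> 1"
  shows "exp (l * (x - m)) \<le> (1 - x) * exp (l * - m) + x * exp (l * (1 - m))"
proof -
  have "exp (l * ((1 - x) *\<^sub>R (- m) + x *\<^sub>R (1 - m))) \<le> (1 - x) * exp (l * - m) + x * exp (l * (1 - m))"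
    using convex_onD[OF convex_on_exp[OF assms(1)], of x "- m" "1 - m"] assms(2,3) by simp
  moreover have "(1 - x) *\<^sub>R (- m) + x *\<^sub>R (1 - m) = x - m" by (simp add: algebra_simps)
  ultimately show ?thesis by simp
qed

lemma exp_chord_mixture_le:
  fixes l m q :: real
  assumes "0 \<le> l" "0 \<le> m" "m \<le> 1" "0 \<le> q"
  shows "q * ((1 - m) * exp (l * - m) + m * exp (l * (1 - m))) + (1 - q) \<le> exp (q * (exp (l\<^sup>2 / 8) - 1))"
proof -
  have pos: "1 + m * (exp l - 1) > 0"
    using assms by (smt (verit) exp_ge_zero mult_nonneg_nonneg one_le_exp_iff)
  have "(1 - m) * exp (l * - m) + m * exp (l * (1 - m)) = exp (- l * m + ln (1 + m * (exp l - 1)))"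
    using pos by (simp add: exp_add algebra_simps exp_diff exp_minus divide_inverse)
  also have "\<dots> \<le> exp (l\<^sup>2 / 8)"
    using Hoeffdings_lemma_aux[OF assms(1,2)] by simp
  finally have "(1 - m) * exp (l * - m) + m * exp (l * (1 - m)) \<le> exp (l\<^sup>2 / 8)" .
  then have "q * ((1 - m) * exp (l * - m) + m * exp (l * (1 - m))) + (1 - q) \<le> q * exp (l\<^sup>2 / 8) + (1 - q)"
    using assms(4) by (simp add: mult_left_mono)
  also have "\<dots> = 1 + q * (exp (l\<^sup>2 / 8) - 1)" by (simp add: algebra_simps)
  also have "\<dots> \<le> exp (q * (exp (l\<^sup>2 / 8) - 1))" by (rule exp_ge_add_one_self)
  finally show ?thesis .
qed

lemma restricted_chernoff_exponent_le:
  fixes q Lg :: real and n :: nat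
  assumes q: "0 < q" and Lg: "0 < Lg" "Lg \<le> n * q"
  defines "l \<equiv> 2 * sqrt (Lg / (n * q))"
  shows "exp (- l * sqrt (n * q * Lg)) * exp (q * (exp (l\<^sup>2 / 8) - 1)) ^ n \<le> exp (- Lg)"
proof -
  have nq: "n * q > 0" using Lg by linarith
  have "l * sqrt (n * q * Lg) = 2 * sqrt (Lg / (n * q) * (n * q * Lg))"
    by (simp only: l_def real_sqrt_mult mult.assoc)
  also have "Lg / (n * q) * (n * q * Lg) = Lg\<^sup>2" using q nq by (simp add: field_simps power2_eq_square zero_less_mult_iff)
  finally have ls: "l * sqrt (n * q * Lg) = 2 * Lg" using Lg by simp
  have "0 \<le> Lg / (n * q)" using Lg nq by simp
  then have l2: "l\<^sup>2 / 8 = Lg / (2 * (n * q))" by (simp add: l_def power_mult_distrib)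
  have "exp (l\<^sup>2 / 8) \<le> 1 + 2 * (l\<^sup>2 / 8)"
    by (rule real_exp_bound_lemma) (use Lg nq in \<open>auto simp: l2 divide_le_eq\<close>)
  then have "n * (q * (exp (l\<^sup>2 / 8) - 1)) \<le> n * (q * (2 * (l\<^sup>2 / 8)))"
    using q by (intro mult_left_mono) auto
  also have "\<dots> = Lg" using q nq by (simp add: l2 zero_less_mult_iff)
  finally have "- l * sqrt (n * q * Lg) + n * (q * (exp (l\<^sup>2 / 8) - 1)) \<le> - Lg" using ls by simp
  then show ?thesis by (simp add: exp_add[symmetric] exp_of_nat_mult[symmetric])
qed

lemma half_count_exponent_le:
  fixes q :: real and n :: nat
  assumes "0 \<le> q" "q \<le> 1"
  shows "exp (- ln 2 * - (n * q / 2)) * (1 - q / 2) ^ n \<le> exp (- (n * q / 8))"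
proof -
  have "(1 - q / 2) ^ n \<le> exp (- q / 2) ^ n"
    using exp_ge_add_one_self[of "- q / 2"] assms by (intro power_mono) auto
  also have "\<dots> = exp (- (n * q / 2))" by (simp add: exp_of_nat_mult[symmetric])
  finally have "exp (- ln 2 * - (n * q / 2)) * (1 - q / 2) ^ n \<le> exp (ln 2 * (n * q / 2)) * exp (- (n * q / 2))"
    by simp
  also have "\<dots> = exp ((ln 2 - 1) * (n * q / 2))" by (simp add: exp_add[symmetric] algebra_simps)
  also have "\<dots> \<le> exp (- (n * q / 8))"
    using mult_right_mono[of "ln 2 - 1" "- 1/4" "n * q / 2"] ln2_le_25_over_36 assms by simp
  finally show ?thesis .
qed

lemma sqrt_mult_div_eq_sqrt_div:
  fixes x y :: real
  assumes "0 < x"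
  shows "sqrt (x * y) / x = sqrt (y / x)"
proof -
  have "sqrt (x * y) / x = sqrt y / (x / sqrt x)" by (simp add: real_sqrt_mult)
  also have "x / sqrt x = sqrt x" using assms by (simp add: real_div_sqrt)
  finally show ?thesis by (simp add: real_sqrt_divide)
qed

section \<open>Chernoff bounds for sums restricted to an event\<close>

context prob_space
begin

lemma integrable_real_bounded:
  "f \<in> borel_measurable M \<Longrightarrow> (\<And>x. \<bar>f x\<bar> \<le> B) \<Longrightarrow> integrable M (f :: _ \<Rightarrow> real)"
  by (rule integrable_const_bound[where B=B]) auto

lemma integral_indicator_event: "A \<in> events \<Longrightarrow> integral\<^sup>L M (indicator A :: _ \<Rightarrow> real) = prob A"
  using sets.sets_into_space by (simp add: Int_absorb2)

lemma set_integral_unit_bounds: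
  assumes [measurable]: "g \<in> borel_measurable M" and g01: "\<And>z. 0 \<le> g z \<and> g z \<le> 1"
    and [measurable]: "A \<in> events"
  shows "0 \<le> (LINT z:A|M. g z)" "(LINT z:A|M. g z) \<le> prob A"
proof -
  show "0 \<le> (LINT z:A|M. g z)"
    unfolding set_lebesgue_integral_def using g01 by (intro Bochner_Integration.integral_nonneg) simp
  have "integral\<^sup>L M (\<lambda>z. indicator A z * g z) \<le> integral\<^sup>L M (indicator A)"
    using g01 by (intro integral_mono integrable_real_bounded[where B=1]) (auto simp: indicator_def)
  then show "(LINT z:A|M. g z) \<le> prob A"
    by (simp add: set_lebesgue_integral_def integral_indicator_event)
qed

lemma set_integral_one_minus:
  assumes [measurable]: "g \<in> borel_measurable M" and g01: "\<And>z. 0 \<le> g z \<and> g z \<le> 1"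
    and [measurable]: "A \<in> events"
  shows "(LINT z:A|M. 1 - g z) = prob A - (LINT z:A|M. g z)"
proof -
  have "integrable M (indicator A :: _ \<Rightarrow> real)" "integrable M (\<lambda>z. indicator A z * g z)"
    using g01 by (auto intro!: integrable_real_bounded[where B=1] simp: indicator_def)
  then show ?thesis
    by (simp add: set_lebesgue_integral_def right_diff_distrib integral_indicator_event)
qed

text \<open>For \<open>g\<close> with values in \<open>[0, 1]\<close> and mean \<open>m\<close> on the event \<open>A\<close>, the moment generating
  function of \<open>1\<^sub>A (g - m)\<close> is that of a variable which is \<open>0\<close> off \<open>A\<close> and, on \<open>A\<close>, is dominated
  by the two-point variable with values \<open>-m\<close> and \<open>1 - m\<close> (convexity of \<open>exp\<close>).\<close>
lemma nn_integral_exp_restricted_le: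
  assumes [measurable]: "g \<in> borel_measurable M" and g01: "\<And>z. 0 \<le> g z \<and> g z \<le> 1"
    and [measurable]: "A \<in> events" and qpos: "prob A > 0"
    and m: "m = (LINT z:A|M. g z) / prob A" and l: "0 \<le> l"
  shows "(\<integral>\<^sup>+z. ennreal (exp (l * (indicator A z * (g z - m)))) \<partial>M)
    \<le> ennreal (exp (prob A * (exp (l\<^sup>2 / 8) - 1)))"
proof -
  define q where "q = prob A"
  define G where "G = (\<lambda>z. indicator A z * g z)"
  define H where
    "H = (\<lambda>z. 1 - indicator A z + exp (l * - m) * (indicator A z - G z) + exp (l * (1 - m)) * G z)"
  have [measurable]: "G \<in> borel_measurable M" unfolding G_def by measurable
  have intA: "integrable M (indicator A :: _ \<Rightarrow> real)" and intG: "integrable M G"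
    using g01 by (auto intro!: integrable_real_bounded[where B=1] simp: indicator_def G_def)
  have IG: "integral\<^sup>L M G = m * q"
    using qpos by (simp add: m q_def G_def set_lebesgue_integral_def)
  have m01: "0 \<le> m" "m \<le> 1"
    using set_integral_unit_bounds[of g A] g01 qpos by (auto simp: m divide_le_eq_1)
  have H0: "0 \<le> H z" for z
    using g01[of z] by (auto simp: H_def G_def indicator_def intro!: add_nonneg_nonneg mult_nonneg_nonneg)
  have pw: "exp (l * (indicator A z * (g z - m))) \<le> H z" for z
    using exp_le_chord[OF l, of "g z" m] g01[of z] by (cases "z \<in> A") (simp_all add: H_def G_def algebra_simps)
  have intH: "integrable M H" unfolding H_def using intA intG by auto
  have "integral\<^sup>L M H = q * ((1 - m) * exp (l * - m) + m * exp (l * (1 - m))) + (1 - q)"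
    using intA intG unfolding H_def
    by (simp add: integral_indicator_event IG q_def prob_space algebra_simps)
  also have "\<dots> \<le> exp (q * (exp (l\<^sup>2 / 8) - 1))"
    by (rule exp_chord_mixture_le[OF l m01]) (simp add: q_def)
  finally have IH: "integral\<^sup>L M H \<le> exp (q * (exp (l\<^sup>2 / 8) - 1))" .
  have "(\<integral>\<^sup>+z. ennreal (exp (l * (indicator A z * (g z - m)))) \<partial>M) \<le> (\<integral>\<^sup>+z. ennreal (H z) \<partial>M)"
    by (intro nn_integral_mono ennreal_leI pw)
  also have "\<dots> = ennreal (integral\<^sup>L M H)" by (rule nn_integral_eq_integral[OF intH]) (simp add: H0)
  finally show ?thesis using IH by (simp add: q_def order_trans)
qed

lemma prob_UN_Un_UN_le:
  fixes a b :: real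
  assumes K: "finite K" and T: "finite T"
    and Gs: "\<And>k. k \<in> K \<Longrightarrow> G k \<in> events" and Hs: "\<And>k t. k \<in> K \<Longrightarrow> t \<in> T \<Longrightarrow> H k t \<in> events"
    and G: "\<And>k. k \<in> K \<Longrightarrow> prob (G k) \<le> a" and H: "\<And>k t. k \<in> K \<Longrightarrow> t \<in> T \<Longrightarrow> prob (H k t) \<le> b"
  shows "prob (\<Union>k\<in>K. G k \<union> (\<Union>t\<in>T. H k t)) \<le> card K * (a + card T * b)"
proof -
  have "prob (\<Union>k\<in>K. G k \<union> (\<Union>t\<in>T. H k t)) \<le> (\<Sum>k\<in>K. prob (G k) + (\<Sum>t\<in>T. prob (H k t)))"
    using K T by (intro order_trans[OF finite_measure_subadditive_finite] sum_mono
        order_trans[OF measure_Un_le] add_mono finite_measure_subadditive_finite)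
      (auto intro!: sets.Un sets.finite_UN Gs Hs)
  also have "\<dots> \<le> (\<Sum>k\<in>K. a + card T * b)"
    using G H by (intro sum_mono add_mono sum_bounded_above) auto
  finally show ?thesis by simp
qed

lemma measure_PiM_sum_ge_le:
  assumes [measurable]: "W \<in> borel_measurable M" and l: "l > 0"
    and B: "(\<integral>\<^sup>+z. ennreal (exp (l * W z)) \<partial>M) \<le> ennreal B" and B0: "0 \<le> B"
  shows "measure (PiM {..<n} (\<lambda>_. M)) {S\<in>space (PiM {..<n} (\<lambda>_. M)). a \<le> (\<Sum>i<n. W (S i))}
      \<le> exp (- l * a) * B ^ n"
proof -
  define P where "P = PiM {..<n} (\<lambda>_. M)"
  interpret P: prob_space P unfolding P_def by (intro prob_space_PiM prob_space_axioms)
  interpret product_sigma_finite "\<lambda>_. M" by standard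
  have "emeasure P {S\<in>space P. a \<le> (\<Sum>i<n. W (S i))}
     \<le> ennreal (exp (- l * a)) * (\<integral>\<^sup>+S. ennreal (exp (l * (\<Sum>i<n. W (S i)))) * indicator (space P) S \<partial>P)"
    by (rule Chernoff_ineq_nn_integral_ge[OF l]) (simp_all add: P_def)
  also have "(\<integral>\<^sup>+S. ennreal (exp (l * (\<Sum>i<n. W (S i)))) * indicator (space P) S \<partial>P)
      = (\<integral>\<^sup>+S. (\<Prod>i\<in>{..<n}. ennreal (exp (l * W (S i)))) \<partial>P)"
    by (intro nn_integral_cong) (simp add: sum_distrib_left exp_sum prod_ennreal)
  also have "\<dots> = (\<Prod>i\<in>{..<n}. (\<integral>\<^sup>+z. ennreal (exp (l * W z)) \<partial>M))"
    unfolding P_def by (rule product_nn_integral_prod) auto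
  also have "\<dots> \<le> ennreal (B ^ n)"
    using prod_mono_ennreal[of "{..<n}", OF B] by (simp add: B0 ennreal_power)
  finally have "emeasure P {S\<in>space P. a \<le> (\<Sum>i<n. W (S i))} \<le> ennreal (exp (- l * a) * B ^ n)"
    by (simp add: B0 ennreal_mult mult_left_mono)
  then show ?thesis unfolding P_def[symmetric] by (simp add: P.emeasure_eq_measure B0)
qed

lemma measure_PiM_restricted_sum_ge:
  fixes n :: nat
  assumes [measurable]: "g \<in> borel_measurable M" and g01: "\<And>z. 0 \<le> g z \<and> g z \<le> 1"
    and [measurable]: "A \<in> events" and qpos: "prob A > 0"
    and m: "m = (LINT z:A|M. g z) / prob A" and Lg: "0 < Lg" "Lg \<le> n * prob A"
  shows "measure (PiM {..<n} (\<lambda>_. M))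
      {S\<in>space (PiM {..<n} (\<lambda>_. M)). sqrt (n * prob A * Lg) \<le> (\<Sum>i<n. indicator A (S i) * (g (S i) - m))}
    \<le> exp (- Lg)"
proof -
  define l where "l = 2 * sqrt (Lg / (n * prob A))"
  have "n * prob A > 0" using Lg by linarith
  then have l0: "l > 0" using Lg by (simp add: l_def)
  have "measure (PiM {..<n} (\<lambda>_. M))
      {S\<in>space (PiM {..<n} (\<lambda>_. M)). sqrt (n * prob A * Lg) \<le> (\<Sum>i<n. indicator A (S i) * (g (S i) - m))}
    \<le> exp (- l * sqrt (n * prob A * Lg)) * exp (prob A * (exp (l\<^sup>2 / 8) - 1)) ^ n"
    using nn_integral_exp_restricted_le[OF assms(1-5), of l] l0
    by (intro measure_PiM_sum_ge_le) simp_all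
  also have "\<dots> \<le> exp (- Lg)"
    unfolding l_def by (rule restricted_chernoff_exponent_le[OF qpos Lg])
  finally show ?thesis .
qed

text \<open>The lower tail is the upper tail of \<open>1 - g\<close>, whose mean on \<open>A\<close> is \<open>1 - m\<close>.\<close>
lemma measure_PiM_restricted_deviation_gt:
  fixes n :: nat
  assumes [measurable]: "g \<in> borel_measurable M" and g01: "\<And>z. 0 \<le> g z \<and> g z \<le> 1"
    and [measurable]: "A \<in> events" and qpos: "prob A > 0"
    and m: "m = (LINT z:A|M. g z) / prob A" and Lg: "0 < Lg" "Lg \<le> n * prob A"
  shows "measure (PiM {..<n} (\<lambda>_. M))
      {S\<in>space (PiM {..<n} (\<lambda>_. M)). sqrt (n * prob A * Lg) < \<bar>\<Sum>i<n. indicator A (S i) * (g (S i) - m)\<bar>}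
    \<le> 2 * exp (- Lg)"
proof -
  define P where "P = PiM {..<n} (\<lambda>_. M)"
  define s where "s = sqrt (n * prob A * Lg)"
  define W where "W S = (\<Sum>i<n. indicator A (S i) * (g (S i) - m))" for S
  interpret P: prob_space P unfolding P_def by (intro prob_space_PiM prob_space_axioms)
  have [measurable]: "W \<in> borel_measurable P" unfolding W_def[abs_def] P_def by measurable
  have upper: "measure P {S\<in>space P. s \<le> W S} \<le> exp (- Lg)"
    unfolding P_def s_def W_def by (rule measure_PiM_restricted_sum_ge[OF assms])
  have m': "1 - m = (LINT z:A|M. 1 - g z) / prob A"
    using qpos by (simp add: set_integral_one_minus[OF assms(1-3)] m field_simps)
  have "\<And>S. (\<Sum>i<n. indicator A (S i) * ((1 - g (S i)) - (1 - m))) = - W S"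
    by (simp add: W_def sum_negf[symmetric] algebra_simps)
  then have lower: "measure P {S\<in>space P. s \<le> - W S} \<le> exp (- Lg)"
    using measure_PiM_restricted_sum_ge[of "\<lambda>z. 1 - g z", OF _ _ assms(3,4) m' Lg] g01
    by (simp add: P_def s_def)
  have "{S\<in>space P. s < \<bar>W S\<bar>} \<subseteq> {S\<in>space P. s \<le> W S} \<union> {S\<in>space P. s \<le> - W S}" by auto
  then have "measure P {S\<in>space P. s < \<bar>W S\<bar>}
      \<le> measure P ({S\<in>space P. s \<le> W S} \<union> {S\<in>space P. s \<le> - W S})"
    by (intro P.finite_measure_mono) measurable
  also have "\<dots> \<le> measure P {S\<in>space P. s \<le> W S} + measure P {S\<in>space P. s \<le> - W S}"
    by (intro measure_Un_le) measurable
  finally show ?thesis using upper lower by (simp add: P_def s_def W_def)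
qed

lemma measure_PiM_count_le_half:
  fixes n :: nat
  assumes [measurable]: "A \<in> events"
  shows "measure (PiM {..<n} (\<lambda>_. M))
      {S\<in>space (PiM {..<n} (\<lambda>_. M)). (\<Sum>i<n. indicator A (S i)) \<le> n * prob A / 2}
    \<le> exp (- (n * prob A / 8))"
proof -
  have "(\<integral>\<^sup>+z. ennreal (exp (ln 2 * - indicator A z)) \<partial>M) = (\<integral>\<^sup>+z. ennreal (1 - indicator A z / 2) \<partial>M)"
    by (intro nn_integral_cong) (auto simp: indicator_def exp_minus)
  also have "\<dots> = ennreal (integral\<^sup>L M (\<lambda>z. 1 - indicator A z / 2))"
    by (rule nn_integral_eq_integral[OF integrable_real_bounded[where B=1]]) (auto simp: indicator_def)
  also have "integral\<^sup>L M (\<lambda>z. 1 - indicator A z / 2) = 1 - prob A / 2"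
  proof -
    have "integrable M (\<lambda>z. indicator A z / 2 :: real)"
      by (rule integrable_real_bounded[where B=1]) (auto simp: indicator_def)
    then have "integral\<^sup>L M (\<lambda>z. 1 - indicator A z / 2) = integral\<^sup>L M (\<lambda>z. 1) - integral\<^sup>L M (\<lambda>z. indicator A z / 2 :: real)"
      by (intro Bochner_Integration.integral_diff) simp_all
    then show ?thesis by (simp add: integral_indicator_event prob_space)
  qed
  finally have mgf: "(\<integral>\<^sup>+z. ennreal (exp (ln 2 * - indicator A z)) \<partial>M) \<le> ennreal (1 - prob A / 2)" by simp
  have "{S\<in>space (PiM {..<n} (\<lambda>_. M)). (\<Sum>i<n. indicator A (S i)) \<le> n * prob A / 2}
      = {S\<in>space (PiM {..<n} (\<lambda>_. M)). - (n * prob A / 2) \<le> (\<Sum>i<n. - indicator A (S i))}"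
    by (auto simp: sum_negf)
  moreover have "measure (PiM {..<n} (\<lambda>_. M))
      {S\<in>space (PiM {..<n} (\<lambda>_. M)). - (n * prob A / 2) \<le> (\<Sum>i<n. - indicator A (S i))}
    \<le> exp (- ln 2 * - (n * prob A / 2)) * (1 - prob A / 2) ^ n"
    by (rule measure_PiM_sum_ge_le[OF _ _ mgf]) (auto intro: order_trans[OF prob_le_1])
  ultimately have "measure (PiM {..<n} (\<lambda>_. M))
      {S\<in>space (PiM {..<n} (\<lambda>_. M)). (\<Sum>i<n. indicator A (S i)) \<le> n * prob A / 2}
    \<le> exp (- ln 2 * - (n * prob A / 2)) * (1 - prob A / 2) ^ n"
    by (simp only:)
  also have "\<dots> \<le> exp (- (n * prob A / 8))" by (rule half_count_exponent_le) auto
  finally show ?thesis .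
qed

end

section \<open>Empirical risk minimisation over a net\<close>

lemma finite_grid_cover:
  fixes lo hi c h :: real
  assumes lohi: "lo \<le> hi" and c: "0 \<le> c" and h: "0 < h"
  obtains T where "finite T" "T \<noteq> {}" "real (card T) \<le> 1 + (hi - lo) * c / h"
    "\<And>t. t \<in> {lo..hi} \<Longrightarrow> \<exists>t'\<in>T. c * \<bar>t - t'\<bar> \<le> h"
proof (cases "(hi - lo) * c = 0")
  case True
  have "c * \<bar>t - lo\<bar> \<le> h" if "t \<in> {lo..hi}" for t
  proof -
    have "c * \<bar>t - lo\<bar> \<le> c * (hi - lo)" using that c by (intro mult_left_mono) auto
    moreover have "c * (hi - lo) = 0" using True by (simp only: mult.commute)
    ultimately show ?thesis using h by linarith
  qed
  then show ?thesis using that[of "{lo}"] lohi c h by auto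
next
  case False
  define X where "X = (hi - lo) * c / h"
  define w where "w = h / c"
  define T where "T = (\<lambda>j::nat. lo + real j * w) ` {..nat \<lfloor>X\<rfloor>}"
  have Xpos: "X > 0" and cpos: "c > 0" and wpos: "w > 0"
    using False lohi c h by (auto simp: X_def w_def)
  have "real (card T) \<le> real (nat \<lfloor>X\<rfloor>) + 1"
    using card_image_le[of "{..nat \<lfloor>X\<rfloor>}" "\<lambda>j. lo + real j * w"] by (simp add: T_def)
  then have card: "real (card T) \<le> 1 + X" using Xpos by linarith
  have "\<exists>t'\<in>T. c * \<bar>t - t'\<bar> \<le> h" if t: "t \<in> {lo..hi}" for t
  proof -
    define j where "j = nat \<lfloor>(t - lo) / w\<rfloor>"
    have r0: "0 \<le> (t - lo) / w" and rX: "(t - lo) / w \<le> X"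
      using t wpos cpos h by (auto simp: w_def X_def field_simps)
    then have "j \<le> nat \<lfloor>X\<rfloor>" by (simp add: j_def nat_mono floor_mono)
    then have "lo + real j * w \<in> T" by (auto simp: T_def)
    moreover have "real j \<le> (t - lo) / w" "(t - lo) / w < real j + 1" using r0 by (auto simp: j_def)
    then have "0 \<le> t - (lo + real j * w)" "t - (lo + real j * w) \<le> w"
      using wpos by (auto simp: field_simps)
    then have "c * \<bar>t - (lo + real j * w)\<bar> \<le> h"
      using cpos mult_left_mono[of "t - (lo + real j * w)" w c] by (simp add: w_def)
    ultimately show ?thesis by blast
  qed
  then show ?thesis using that[of T] card by (auto simp: T_def X_def)
qed

lemma empirical_minimiser_excess_le:
  fixes E \<mu> :: "real \<Rightarrow> real" and T :: "real set"
  assumes N: "N > 0"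
    and E: "\<And>t t'. \<bar>E t - E t'\<bar> \<le> N * (c * \<bar>t - t'\<bar>)"
    and \<mu>: "\<And>t t'. \<bar>\<mu> t - \<mu> t'\<bar> \<le> c * \<bar>t - t'\<bar>"
    and dev: "\<And>t'. t' \<in> T \<Longrightarrow> \<bar>E t' - N * \<mu> t'\<bar> \<le> N * eps"
    and net: "\<And>t. t \<in> {lo..hi} \<Longrightarrow> \<exists>t'\<in>T. c * \<bar>t - t'\<bar> \<le> d"
    and a: "a \<in> {lo..hi}" and amin: "\<And>t. t \<in> {lo..hi} \<Longrightarrow> E a \<le> E t"
    and t: "t \<in> {lo..hi}"
  shows "\<mu> a \<le> \<mu> t + 2 * eps + 4 * d"
proof -
  have uniform: "\<bar>E u / N - \<mu> u\<bar> \<le> eps + 2 * d" if u: "u \<in> {lo..hi}" for u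
  proof -
    obtain t' where t': "t' \<in> T" "c * \<bar>u - t'\<bar> \<le> d" using net[OF u] by blast
    have "N * \<bar>\<mu> t' - \<mu> u\<bar> = \<bar>N * \<mu> t' - N * \<mu> u\<bar>"
      using N by (simp add: abs_mult right_diff_distrib[symmetric])
    then have "\<bar>E u - N * \<mu> u\<bar> \<le> \<bar>E u - E t'\<bar> + \<bar>E t' - N * \<mu> t'\<bar> + N * \<bar>\<mu> t' - \<mu> u\<bar>"
      by linarith
    also have "\<dots> \<le> N * d + N * eps + N * d"
    proof (intro add_mono)
      show "\<bar>E u - E t'\<bar> \<le> N * d" using E[of u t'] t'(2) N by (meson mult_left_mono order.trans less_imp_le)
      show "\<bar>E t' - N * \<mu> t'\<bar> \<le> N * eps" by (rule dev[OF t'(1)])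
      show "N * \<bar>\<mu> t' - \<mu> u\<bar> \<le> N * d"
        using \<mu>[of t' u] t'(2) N by (intro mult_left_mono) (auto simp: abs_minus_commute)
    qed
    finally have "\<bar>E u - N * \<mu> u\<bar> \<le> N * (eps + 2 * d)" by (simp add: algebra_simps)
    moreover have "\<bar>E u / N - \<mu> u\<bar> = \<bar>E u - N * \<mu> u\<bar> / N"
      using N by (simp add: field_simps abs_div_pos[symmetric])
    ultimately show ?thesis using N by (simp add: divide_le_eq mult.commute)
  qed
  have "E a / N \<le> E t / N" using amin[OF t] N by (simp add: divide_right_mono)
  then show ?thesis using uniform[OF a] uniform[OF t] by linarith
qed

definition calib_rate :: "real \<Rightarrow> real \<Rightarrow> real \<Rightarrow> nat \<Rightarrow> real" where
  "calib_rate X \<delta> p n = 6 * sqrt (ln (1 + X) / (p * n)) + 12 * sqrt (ln (2 / \<delta>) / (p * n))"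

lemma ln_two_mult_div_le:
  fixes N X \<delta> :: real
  assumes "1 \<le> N" "N \<le> 1 + X" "0 < \<delta>"
  shows "ln (2 * N / \<delta>) \<le> ln (1 + X) + ln (2 / \<delta>)"
proof -
  have "ln (2 * N / \<delta>) = ln N + ln (2 / \<delta>)"
    using assms ln_mult_pos[of N "2 / \<delta>"] by (simp add: mult.commute times_divide_eq_right)
  then show ?thesis using assms by simp
qed

lemma deviation_terms_le_calib_rate:
  fixes p N X \<delta> :: real and n :: nat
  assumes p: "0 < p" "p \<le> 1" and n: "n > 0" and \<delta>: "0 < \<delta>" "\<delta> < 1" and N: "1 \<le> N" "N \<le> 1 + X"
  shows "4 * sqrt (ln (2 * N / \<delta>) / (n * p)) + 4 * (1 / (2 * sqrt n)) \<le> calib_rate X \<delta> p n"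
proof -
  define A where "A = ln (1 + X) / (n * p)"
  define B where "B = ln (2 / \<delta>) / (n * p)"
  have np: "n * p > 0" using p n by simp
  have "ln 2 \<le> ln (2 / \<delta>)" using \<delta> by (simp add: field_simps)
  then have lnB: "2 / 3 \<le> ln (2 / \<delta>)" using ln2_ge_two_thirds by linarith
  have A0: "0 \<le> A" using N np by (simp add: A_def)
  have "ln (2 * N / \<delta>) / (n * p) \<le> (ln (1 + X) + ln (2 / \<delta>)) / (n * p)"
    using ln_two_mult_div_le[OF N \<delta>(1)] np by (intro divide_right_mono) auto
  then have "sqrt (ln (2 * N / \<delta>) / (n * p)) \<le> sqrt (A + B)"
    by (simp add: A_def B_def add_divide_distrib)
  also have "\<dots> \<le> sqrt A + sqrt B"
    using A0 lnB np by (intro sqrt_add_le_add_sqrt) (auto simp: B_def)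
  finally have s1: "sqrt (ln (2 * N / \<delta>) / (n * p)) \<le> sqrt A + sqrt B" .
  have "(1 / (4 * sqrt n))\<^sup>2 \<le> B"
  proof -
    have "(1 / (4 * sqrt n))\<^sup>2 = 1 / (16 * n)" by (simp add: power_divide power_mult_distrib)
    moreover have "n * p \<le> 16 * n * ln (2 / \<delta>)" using p lnB n mult_left_mono[of p 1 n] by simp
    ultimately show ?thesis using np n by (simp add: B_def field_simps)
  qed
  then have s2: "1 / (4 * sqrt n) \<le> sqrt B" by (rule real_le_rsqrt)
  have "calib_rate X \<delta> p n = 6 * sqrt A + 12 * sqrt B" by (simp add: calib_rate_def A_def B_def mult.commute)
  moreover have "4 * (1 / (2 * sqrt n)) = 8 * (1 / (4 * sqrt n))" by simp
  ultimately show ?thesis using s1 s2 real_sqrt_ge_zero[OF A0] by linarith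
qed

text \<open>For classes too rare for the concentration bound, the trivial bound \<open>1\<close> on the risk suffices.\<close>
lemma one_le_calib_rate:
  fixes p N X \<delta> :: real and n :: nat
  assumes p: "0 < p" and n: "n > 0" and \<delta>: "0 < \<delta>" "\<delta> < 1" and N: "1 \<le> N" "N \<le> 1 + X"
    and rare: "n * p < ln (2 * N / \<delta>)"
  shows "1 \<le> calib_rate X \<delta> p n"
proof -
  define A where "A = ln (1 + X) / (p * n)"
  define B where "B = ln (2 / \<delta>) / (p * n)"
  have np: "p * n > 0" using p n by simp
  have A0: "0 \<le> A" and B0: "0 \<le> B" using N \<delta> np by (simp_all add: A_def B_def)
  have "1 < A + B"
    using rare ln_two_mult_div_le[OF N \<delta>(1)] np
    by (simp add: A_def B_def add_divide_distrib[symmetric] less_divide_eq mult.commute)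
  then have "1 / 2 \<le> A \<or> 1 / 2 \<le> B" by linarith
  moreover have "1 / 6 \<le> sqrt x" if "1 / 2 \<le> x" for x :: real
    using that by (intro real_le_rsqrt) (simp add: power2_eq_square)
  ultimately have "1 / 6 \<le> sqrt A \<or> 1 / 6 \<le> sqrt B" by blast
  then have "1 \<le> 6 * sqrt A + 12 * sqrt B"
    using real_sqrt_ge_zero[OF A0] real_sqrt_ge_zero[OF B0] by (elim disjE) linarith+
  then show ?thesis unfolding calib_rate_def A_def B_def .
qed

section \<open>Temperature scaling per predicted class\<close>

locale temperature_scaling =
  fixes MX :: "'x measure" and D :: "('x \<times> 'k::finite) measure"
    and flgt :: "'x \<Rightarrow> real^'k" and hat :: "'x \<Rightarrow> 'k"
    and Lcal :: "real^'k \<Rightarrow> real^'k \<Rightarrow> real"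
    and Lf Lc :: real
  assumes prob_space_D: "prob_space D"
    and sets_D: "sets D = sets (MX \<Otimes>\<^sub>M count_space UNIV)"
    and flgt_measurable: "flgt \<in> borel_measurable MX"
    and hat_measurable: "hat \<in> MX \<rightarrow>\<^sub>M count_space UNIV"
    and norm_flgt_le: "\<forall>x. norm (flgt x) \<le> Lf"
    and Lcal_bounds: "\<forall>y u. 0 \<le> Lcal y u \<and> Lcal y u \<le> 1"
    and Lcal_lipschitz: "\<forall>y u v. \<bar>Lcal y u - Lcal y v\<bar> \<le> Lc * norm (u - v)"
begin

sublocale prob_space D by (rule prob_space_D)

definition loss :: "real \<Rightarrow> 'x \<times> 'k \<Rightarrow> real" where
  "loss t z = Lcal (onehot (snd z)) (temp_scaled flgt t (fst z))"

definition class_set :: "'k \<Rightarrow> ('x \<times> 'k) set" where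
  "class_set k = {z\<in>space D. hat (fst z) = k}"

abbreviation risk :: "'k \<Rightarrow> real \<Rightarrow> real" where
  "risk k t \<equiv> cond_calib_loss Lcal flgt hat D k t"

abbreviation samples :: "nat \<Rightarrow> (nat \<Rightarrow> 'x \<times> 'k) measure" where
  "samples n \<equiv> PiM {..<n} (\<lambda>_. D)"

lemma Lf_nonneg: "0 \<le> Lf"
  using norm_flgt_le norm_ge_zero order.trans by blast

lemma Lc_nonneg: "0 \<le> Lc"
proof -
  have "0 \<le> Lc * norm ((0::real^'k) - axis undefined 1)"
    using Lcal_lipschitz by (meson abs_ge_zero order.trans)
  moreover have "norm ((0::real^'k) - axis undefined 1) > 0" by (simp add: axis_eq_0_iff)
  ultimately show ?thesis by (simp add: zero_le_mult_iff)
qed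

lemma loss_bounds: "0 \<le> loss t z \<and> loss t z \<le> 1"
  using Lcal_bounds by (simp add: loss_def)

lemma loss_lipschitz: "\<bar>loss t z - loss t' z\<bar> \<le> 2 * Lf * Lc * \<bar>t - t'\<bar>"
proof -
  have "\<bar>loss t z - loss t' z\<bar> \<le> Lc * norm (temp_scaled flgt t (fst z) - temp_scaled flgt t' (fst z))"
    using Lcal_lipschitz by (simp add: loss_def)
  also have "\<dots> \<le> Lc * (2 * norm (flgt (fst z)) * \<bar>t - t'\<bar>)"
    using norm_softmax_scaleR_diff_le Lc_nonneg by (intro mult_left_mono) (simp_all add: temp_scaled_def)
  also have "\<dots> \<le> Lc * (2 * Lf * \<bar>t - t'\<bar>)"
    using norm_flgt_le Lc_nonneg by (intro mult_left_mono mult_right_mono) auto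
  finally show ?thesis by (simp add: mult_ac)
qed

lemma class_set_sets [measurable]: "class_set k \<in> events"
proof -
  have "(\<lambda>z. hat (fst z)) \<in> measurable (MX \<Otimes>\<^sub>M count_space UNIV) (count_space UNIV)"
    using hat_measurable by measurable
  then have "(\<lambda>z. hat (fst z)) \<in> measurable D (count_space UNIV)"
    using measurable_cong_sets[OF sets_D refl] by blast
  then have "(\<lambda>z. hat (fst z)) -` {k} \<inter> space D \<in> events" by (rule measurable_sets) auto
  moreover have "class_set k = (\<lambda>z. hat (fst z)) -` {k} \<inter> space D" by (auto simp: class_set_def)
  ultimately show ?thesis by simp
qed

lemma loss_measurable [measurable]: "loss t \<in> borel_measurable D"
proof -
  have Lcal_cont: "continuous_on UNIV (Lcal y)" for y
    using Lcal_lipschitz Lc_nonneg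
    by (intro lipschitz_on_continuous_on[of Lc]) (auto simp: lipschitz_on_def dist_norm)
  have "(\<lambda>z. Lcal (onehot y) (temp_scaled flgt t (fst z))) \<in> borel_measurable (MX \<Otimes>\<^sub>M count_space UNIV)" for y
  proof -
    have "(\<lambda>x. Lcal (onehot y) (softmax (t *\<^sub>R flgt x))) \<in> borel_measurable MX"
      by (intro borel_measurable_continuous_on[OF Lcal_cont] borel_measurable_continuous_on[OF continuous_on_softmax])
        (use flgt_measurable in measurable)
    then show ?thesis unfolding temp_scaled_def by measurable
  qed
  then have "(\<lambda>z. Lcal (onehot (snd z)) (temp_scaled flgt t (fst z))) \<in> borel_measurable (MX \<Otimes>\<^sub>M count_space UNIV)"
    by (rule measurable_compose_countable'[where I=UNIV and g=snd
          and f="\<lambda>y z. Lcal (onehot y) (temp_scaled flgt t (fst z))"]) auto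
  then show ?thesis unfolding loss_def[abs_def] by (subst measurable_cong_sets[OF sets_D refl]) simp
qed

lemma risk_eq: "risk k t = (LINT z:class_set k|D. loss t z) / prob (class_set k)"
  by (simp add: cond_calib_loss_def loss_def[abs_def] class_set_def)

lemma risk_bounds: "0 \<le> risk k t" "risk k t \<le> 1"
  using set_integral_unit_bounds[of "loss t" "class_set k"] loss_bounds
  by (auto simp: risk_eq divide_le_eq_1)

lemma risk_lipschitz:
  assumes q: "prob (class_set k) > 0"
  shows "\<bar>risk k t - risk k t'\<bar> \<le> 2 * Lf * Lc * \<bar>t - t'\<bar>"
proof -
  define c where "c = 2 * Lf * Lc * \<bar>t - t'\<bar>"
  define f where "f = (\<lambda>z. indicator (class_set k) z * (loss t z - loss t' z))"
  have [measurable]: "f \<in> borel_measurable D" unfolding f_def by measurable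
  have int: "integrable D (\<lambda>z. indicator (class_set k) z * loss s z)" for s
    by (rule integrable_real_bounded[where B=1]) (use loss_bounds in \<open>auto simp: indicator_def\<close>)
  have "(LINT z:class_set k|D. loss t z) - (LINT z:class_set k|D. loss t' z) = integral\<^sup>L D f"
    using int[of t] int[of t']
    by (simp add: set_lebesgue_integral_def f_def right_diff_distrib)
  also have "\<bar>integral\<^sup>L D f\<bar> \<le> integral\<^sup>L D (\<lambda>z. indicator (class_set k) z * c)"
    using loss_lipschitz Lf_nonneg Lc_nonneg
    by (intro order_trans[OF integral_abs_bound] integral_mono integrable_real_bounded[where B=c])
      (auto simp: f_def indicator_def c_def)
  finally have "\<bar>prob (class_set k) * (risk k t - risk k t')\<bar> \<le> prob (class_set k) * c"
    using q by (simp add: risk_eq right_diff_distrib integral_indicator_event)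
  then show ?thesis using q by (simp add: abs_mult c_def)
qed

lemma p_min_le_prob_class_set: "p_min hat D \<le> prob (class_set k)"
  unfolding p_min_def class_set_def by (rule Min_le) auto

lemma p_min_nonneg: "0 \<le> p_min hat D"
  using Min_in[of "range (\<lambda>k. prob (class_set k))"] by (auto simp: p_min_def class_set_def)

definition class_count :: "nat \<Rightarrow> 'k \<Rightarrow> (nat \<Rightarrow> 'x \<times> 'k) \<Rightarrow> real" where
  "class_count n k S = (\<Sum>i<n. indicator (class_set k) (S i))"

definition class_sum :: "nat \<Rightarrow> 'k \<Rightarrow> real \<Rightarrow> (nat \<Rightarrow> 'x \<times> 'k) \<Rightarrow> real" where
  "class_sum n k t S = (\<Sum>i<n. indicator (class_set k) (S i) * loss t (S i))"

lemma class_sum_lipschitz: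
  "\<bar>class_sum n k t S - class_sum n k t' S\<bar> \<le> class_count n k S * (2 * Lf * Lc * \<bar>t - t'\<bar>)"
proof -
  have "class_sum n k t S - class_sum n k t' S
      = (\<Sum>i<n. indicator (class_set k) (S i) * (loss t (S i) - loss t' (S i)))"
    unfolding class_sum_def by (simp only: sum_subtractf[symmetric] right_diff_distrib)
  then have "\<bar>class_sum n k t S - class_sum n k t' S\<bar>
      \<le> (\<Sum>i<n. \<bar>indicator (class_set k) (S i) * (loss t (S i) - loss t' (S i))\<bar>)"
    by (simp only: sum_abs)
  also have "\<dots> \<le> (\<Sum>i<n. indicator (class_set k) (S i) * (2 * Lf * Lc * \<bar>t - t'\<bar>))"
    by (intro sum_mono) (auto simp: indicator_def loss_lipschitz)
  finally show ?thesis by (simp add: class_count_def sum_distrib_right)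
qed

lemma emp_calib_loss_update_diff:
  assumes S: "S \<in> space (samples n)"
  shows "emp_calib_loss Lcal flgt hat n S (\<chi> j. if j = k then t else a $ j) - emp_calib_loss Lcal flgt hat n S a
    = (class_sum n k t S - class_sum n k (a $ k) S) / n"
proof -
  have Si: "S i \<in> space D" if "i < n" for i using S that by (auto simp: space_PiM)
  have "emp_calib_loss Lcal flgt hat n S (\<chi> j. if j = k then t else a $ j) - emp_calib_loss Lcal flgt hat n S a
    = (1 / n) * (\<Sum>i<n. loss ((\<chi> j. if j = k then t else a $ j) $ hat (fst (S i))) (S i)
                        - loss (a $ hat (fst (S i))) (S i))"
    unfolding emp_calib_loss_def loss_def[symmetric] by (simp only: sum_subtractf right_diff_distrib)
  also have "(\<Sum>i<n. loss ((\<chi> j. if j = k then t else a $ j) $ hat (fst (S i))) (S i) - loss (a $ hat (fst (S i))) (S i))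
     = (\<Sum>i<n. indicator (class_set k) (S i) * loss t (S i) - indicator (class_set k) (S i) * loss (a $ k) (S i))"
    by (intro sum.cong refl) (auto simp: class_set_def indicator_def Si)
  also have "\<dots> = class_sum n k t S - class_sum n k (a $ k) S"
    by (simp only: class_sum_def sum_subtractf)
  finally show ?thesis by simp
qed

lemma class_sum_of_empirical_minimiser:
  assumes S: "S \<in> space (samples n)" and n: "n > 0"
    and box: "\<forall>j. am \<le> a $ j \<and> a $ j \<le> ap"
    and amin: "\<forall>b::real^'k. (\<forall>j. am \<le> b $ j \<and> b $ j \<le> ap) \<longrightarrow>
             emp_calib_loss Lcal flgt hat n S a \<le> emp_calib_loss Lcal flgt hat n S b"
    and u: "u \<in> {am..ap}"
  shows "class_sum n k (a $ k) S \<le> class_sum n k u S"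
proof -
  have "\<forall>j. am \<le> (\<chi> j. if j = k then u else a $ j) $ j \<and> (\<chi> j. if j = k then u else a $ j) $ j \<le> ap"
    using box u by auto
  then have "0 \<le> (class_sum n k u S - class_sum n k (a $ k) S) / n"
    using amin emp_calib_loss_update_diff[OF S, of k u a] by fastforce
  then show ?thesis using n by (simp add: zero_le_divide_iff)
qed

lemma class_deviation_eq:
  "class_sum n k t S - class_count n k S * risk k t
    = (\<Sum>i<n. indicator (class_set k) (S i) * (loss t (S i) - risk k t))"
  by (simp only: class_sum_def class_count_def sum_distrib_right sum_subtractf[symmetric] right_diff_distrib)

lemma measure_class_count_le_half:
  "measure (samples n) {S\<in>space (samples n). class_count n k S \<le> n * prob (class_set k) / 2}
    \<le> exp (- p_min hat D * n / 8)"
proof -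
  have "exp (- (n * prob (class_set k) / 8)) \<le> exp (- p_min hat D * n / 8)"
    using p_min_le_prob_class_set[of k] by (simp add: mult_left_mono mult.commute)
  then show ?thesis
    unfolding class_count_def by (intro order_trans[OF measure_PiM_count_le_half]) auto
qed

lemma measure_class_deviation_gt:
  assumes Lg: "0 < Lg" "Lg \<le> n * prob (class_set k)"
  shows "measure (samples n) {S\<in>space (samples n).
      sqrt (n * prob (class_set k) * Lg) < \<bar>class_sum n k t S - class_count n k S * risk k t\<bar>}
    \<le> 2 * exp (- Lg)"
proof -
  have "0 < n * prob (class_set k)" using Lg by linarith
  then have q: "prob (class_set k) > 0" by (simp add: zero_less_mult_iff)
  show ?thesis
    using measure_PiM_restricted_deviation_gt[OF loss_measurable[of t] loss_bounds class_set_sets q risk_eq Lg]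
    by (simp only: class_deviation_eq)
qed

lemma good_sample_event:
  fixes T :: "real set" and Lg :: real
  assumes T: "finite T" and Lg: "0 < Lg"
  obtains E where "E \<in> sets (samples n)"
    "measure (samples n) E \<ge> 1 - CARD('k) * (2 * card T * exp (- Lg) + exp (- p_min hat D * n / 8))"
    "\<And>S k. S \<in> E \<Longrightarrow> Lg \<le> n * prob (class_set k) \<Longrightarrow> n * prob (class_set k) / 2 < class_count n k S"
    "\<And>S k t. S \<in> E \<Longrightarrow> Lg \<le> n * prob (class_set k) \<Longrightarrow> t \<in> T \<Longrightarrow>
       \<bar>class_sum n k t S - class_count n k S * risk k t\<bar> \<le> sqrt (n * prob (class_set k) * Lg)"
proof -
  interpret P: prob_space "samples n" by (intro prob_space_PiM prob_space_axioms)
  define Kg where "Kg = {k. Lg \<le> n * prob (class_set k)}"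
  define G where "G k = {S\<in>space (samples n). class_count n k S \<le> n * prob (class_set k) / 2}" for k
  define H where "H k t = {S\<in>space (samples n).
    sqrt (n * prob (class_set k) * Lg) < \<bar>class_sum n k t S - class_count n k S * risk k t\<bar>}" for k t
  define Bad where "Bad = (\<Union>k\<in>Kg. G k \<union> (\<Union>t\<in>T. H k t))"
  have [measurable]: "G k \<in> sets (samples n)" "H k t \<in> sets (samples n)" for k t
    unfolding G_def H_def class_count_def class_sum_def by measurable
  have mG: "measure (samples n) (G k) \<le> exp (- p_min hat D * n / 8)" for k
    unfolding G_def by (rule measure_class_count_le_half)
  have mH: "measure (samples n) (H k t) \<le> 2 * exp (- Lg)" if "k \<in> Kg" for k t
    unfolding H_def using that Lg by (intro measure_class_deviation_gt) (auto simp: Kg_def)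
  have "measure (samples n) Bad \<le> card Kg * (exp (- p_min hat D * n / 8) + card T * (2 * exp (- Lg)))"
    unfolding Bad_def by (rule P.prob_UN_Un_UN_le) (use T mG mH in auto)
  also have "\<dots> \<le> CARD('k) * (exp (- p_min hat D * n / 8) + card T * (2 * exp (- Lg)))"
    using card_mono[of UNIV Kg] by (intro mult_right_mono) auto
  also have "\<dots> = CARD('k) * (2 * card T * exp (- Lg) + exp (- p_min hat D * n / 8))"
    by (simp add: algebra_simps)
  finally have mBad: "measure (samples n) Bad
    \<le> CARD('k) * (2 * card T * exp (- Lg) + exp (- p_min hat D * n / 8))" .
  have Bad_sets: "Bad \<in> sets (samples n)" unfolding Bad_def using T by (auto intro!: sets.Un sets.finite_UN)
  show ?thesis
  proof (rule that[of "space (samples n) - Bad"])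
    show "space (samples n) - Bad \<in> sets (samples n)" using Bad_sets by auto
    show "measure (samples n) (space (samples n) - Bad)
      \<ge> 1 - CARD('k) * (2 * card T * exp (- Lg) + exp (- p_min hat D * n / 8))"
      using mBad P.prob_compl[OF Bad_sets] by simp
  next
    fix S k assume "S \<in> space (samples n) - Bad" "Lg \<le> n * prob (class_set k)"
    then show "n * prob (class_set k) / 2 < class_count n k S" by (auto simp: Bad_def Kg_def G_def)
  next
    fix S k t assume "S \<in> space (samples n) - Bad" "Lg \<le> n * prob (class_set k)" "t \<in> T"
    then show "\<bar>class_sum n k t S - class_count n k S * risk k t\<bar> \<le> sqrt (n * prob (class_set k) * Lg)"
      by (auto simp: Bad_def Kg_def H_def not_less)
  qed
qed

lemma risk_of_empirical_minimiser_le: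
  assumes S: "S \<in> space (samples n)" and n: "n > 0"
    and box: "\<forall>j. am \<le> a $ j \<and> a $ j \<le> ap"
    and amin: "\<forall>b::real^'k. (\<forall>j. am \<le> b $ j \<and> b $ j \<le> ap) \<longrightarrow>
             emp_calib_loss Lcal flgt hat n S a \<le> emp_calib_loss Lcal flgt hat n S b"
    and q: "prob (class_set k) > 0"
    and count: "n * prob (class_set k) / 2 < class_count n k S"
    and dev: "\<And>t. t \<in> T \<Longrightarrow>
      \<bar>class_sum n k t S - class_count n k S * risk k t\<bar> \<le> sqrt (n * prob (class_set k) * Lg)"
    and net: "\<And>t. t \<in> {am..ap} \<Longrightarrow> \<exists>t'\<in>T. 2 * Lf * Lc * \<bar>t - t'\<bar> \<le> d"
    and Lg: "0 \<le> Lg" and t: "t \<in> {am..ap}"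
  shows "risk k (a $ k) \<le> risk k t + 4 * sqrt (Lg / (n * prob (class_set k))) + 4 * d"
proof -
  define N where "N = class_count n k S"
  define eps where "eps = sqrt (n * prob (class_set k) * Lg) / N"
  have nq: "n * prob (class_set k) > 0" using n q by simp
  then have N: "N > 0" using count by (simp add: N_def)
  have excess: "risk k (a $ k) \<le> risk k t + 2 * eps + 4 * d"
  proof (rule empirical_minimiser_excess_le[where E="\<lambda>t. class_sum n k t S" and N=N and T=T
        and c="2 * Lf * Lc" and lo=am and hi=ap and \<mu>="risk k" and a="a $ k"])
    show "\<bar>class_sum n k t S - class_sum n k t' S\<bar> \<le> N * (2 * Lf * Lc * \<bar>t - t'\<bar>)" for t t'
      unfolding N_def by (rule class_sum_lipschitz)
    show "\<bar>class_sum n k t' S - N * risk k t'\<bar> \<le> N * eps" if "t' \<in> T" for t'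
      using dev[OF that] N by (simp add: N_def eps_def mult.commute)
    show "class_sum n k (a $ k) S \<le> class_sum n k u S" if "u \<in> {am..ap}" for u
      by (rule class_sum_of_empirical_minimiser[OF S n box amin that])
  qed (use N risk_lipschitz[OF q] net box t in auto)
  have "eps \<le> sqrt (n * prob (class_set k) * Lg) / (n * prob (class_set k) / 2)"
    unfolding eps_def N_def using count nq Lg by (intro divide_left_mono) auto
  also have "\<dots> = 2 * sqrt (Lg / (n * prob (class_set k)))"
    unfolding sqrt_mult_div_eq_sqrt_div[OF nq, symmetric] by simp
  finally show ?thesis using excess by simp
qed

lemma temperature_grid:
  fixes n :: nat
  assumes "am \<le> ap" "n > 0"
  obtains T where "finite T" "1 \<le> real (card T)" "real (card T) \<le> 1 + 4 * (ap - am) * sqrt n * Lf * Lc"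
    "\<And>t. t \<in> {am..ap} \<Longrightarrow> \<exists>t'\<in>T. 2 * Lf * Lc * \<bar>t - t'\<bar> \<le> 1 / (2 * sqrt n)"
proof -
  have "0 \<le> 2 * Lf * Lc" using Lf_nonneg Lc_nonneg by simp
  moreover have "0 < 1 / (2 * sqrt n)" using assms(2) by simp
  ultimately obtain T where "finite T" "T \<noteq> {}"
      "card T \<le> 1 + (ap - am) * (2 * Lf * Lc) / (1 / (2 * sqrt n))"
    and "\<And>t. t \<in> {am..ap} \<Longrightarrow> \<exists>t'\<in>T. 2 * Lf * Lc * \<bar>t - t'\<bar> \<le> 1 / (2 * sqrt n)"
    using finite_grid_cover[OF assms(1)] by blast
  then show ?thesis
    using that[of T] by (auto simp: Suc_le_eq card_gt_0_iff field_simps)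
qed

lemma risk_of_empirical_minimiser_le_calib_rate:
  fixes T :: "real set" and \<delta> X :: real
  defines "Lg \<equiv> ln (2 * real (card T) / \<delta>)"
  assumes S: "S \<in> space (samples n)" and n: "n > 0"
    and box: "\<forall>j. am \<le> a $ j \<and> a $ j \<le> ap"
    and amin: "\<forall>b::real^'k. (\<forall>j. am \<le> b $ j \<and> b $ j \<le> ap) \<longrightarrow>
             emp_calib_loss Lcal flgt hat n S a \<le> emp_calib_loss Lcal flgt hat n S b"
    and \<delta>: "0 < \<delta>" "\<delta> < 1" and p: "0 < p_min hat D"
    and N: "1 \<le> real (card T)" "real (card T) \<le> 1 + X"
    and net: "\<And>t. t \<in> {am..ap} \<Longrightarrow> \<exists>t'\<in>T. 2 * Lf * Lc * \<bar>t - t'\<bar> \<le> 1 / (2 * sqrt n)"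
    and count: "Lg \<le> n * prob (class_set k) \<Longrightarrow> n * prob (class_set k) / 2 < class_count n k S"
    and dev: "\<And>t. Lg \<le> n * prob (class_set k) \<Longrightarrow> t \<in> T \<Longrightarrow>
      \<bar>class_sum n k t S - class_count n k S * risk k t\<bar> \<le> sqrt (n * prob (class_set k) * Lg)"
    and t: "t \<in> {am..ap}"
  shows "risk k (a $ k) \<le> risk k t + calib_rate X \<delta> (p_min hat D) n"
proof -
  have pq: "p_min hat D \<le> prob (class_set k)" by (rule p_min_le_prob_class_set)
  show ?thesis
  proof (cases "Lg \<le> n * prob (class_set k)")
    case True
    have Lg0: "0 < Lg" unfolding Lg_def using N \<delta> by (simp add: field_simps)
    then have "0 < n * prob (class_set k)" using True by linarith
    then have q: "prob (class_set k) > 0" by (simp add: zero_less_mult_iff)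
    have "risk k (a $ k) \<le> risk k t + 4 * sqrt (Lg / (n * prob (class_set k))) + 4 * (1 / (2 * sqrt n))"
      using Lg0 t by (intro risk_of_empirical_minimiser_le[OF S n box amin q count[OF True] dev[OF True] net]) auto
    moreover have "sqrt (Lg / (n * prob (class_set k))) \<le> sqrt (Lg / (n * p_min hat D))"
      using pq p n Lg0 by (intro real_sqrt_le_mono divide_left_mono mult_left_mono) auto
    moreover have "4 * sqrt (Lg / (n * p_min hat D)) + 4 * (1 / (2 * sqrt n)) \<le> calib_rate X \<delta> (p_min hat D) n"
      unfolding Lg_def by (rule deviation_terms_le_calib_rate[OF p order_trans[OF pq prob_le_1] n \<delta> N])
    ultimately show ?thesis by linarith
  next
    case False
    then have "n * p_min hat D < ln (2 * real (card T) / \<delta>)"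
      using mult_left_mono[OF pq, of "real n"] by (simp add: Lg_def)
    then have "1 \<le> calib_rate X \<delta> (p_min hat D) n" by (rule one_le_calib_rate[OF p n \<delta> N])
    then show ?thesis using risk_bounds[of k "a $ k"] risk_bounds[of k t] by linarith
  qed
qed

theorem excess_risk_le_calib_rate:
  assumes am_ap: "am \<le> ap" and \<delta>: "0 < \<delta>" "\<delta> < 1" and p: "0 < p_min hat D" and n: "n > 0"
  shows "\<exists>E \<in> sets (samples n).
     measure (samples n) E \<ge> 1 - CARD('k) * (\<delta> + exp (- p_min hat D * n / 8)) \<and>
     (\<forall>S\<in>E. \<forall>a::real^'k.
        (\<forall>j. am \<le> a $ j \<and> a $ j \<le> ap) \<and>
        (\<forall>b::real^'k. (\<forall>j. am \<le> b $ j \<and> b $ j \<le> ap) \<longrightarrow>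
             emp_calib_loss Lcal flgt hat n S a \<le> emp_calib_loss Lcal flgt hat n S b)
        \<longrightarrow> (\<forall>k. risk k (a $ k) \<le> (INF t\<in>{am..ap}. risk k t)
              + calib_rate (4 * (ap - am) * sqrt n * Lf * Lc) \<delta> (p_min hat D) n))"
proof -
  define X where "X = 4 * (ap - am) * sqrt n * Lf * Lc"
  obtain T where T: "finite T" and N: "1 \<le> real (card T)" "real (card T) \<le> 1 + X"
    and net: "\<And>t. t \<in> {am..ap} \<Longrightarrow> \<exists>t'\<in>T. 2 * Lf * Lc * \<bar>t - t'\<bar> \<le> 1 / (2 * sqrt n)"
    using temperature_grid[OF am_ap n] unfolding X_def by blast
  define Lg where "Lg = ln (2 * real (card T) / \<delta>)"
  have Lg0: "0 < Lg" unfolding Lg_def using N \<delta> by (simp add: field_simps)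
  obtain E where E: "E \<in> sets (samples n)"
      "measure (samples n) E \<ge> 1 - CARD('k) * (2 * card T * exp (- Lg) + exp (- p_min hat D * n / 8))"
    and count: "\<And>S k. S \<in> E \<Longrightarrow> Lg \<le> n * prob (class_set k) \<Longrightarrow> n * prob (class_set k) / 2 < class_count n k S"
    and dev: "\<And>S k t. S \<in> E \<Longrightarrow> Lg \<le> n * prob (class_set k) \<Longrightarrow> t \<in> T \<Longrightarrow>
       \<bar>class_sum n k t S - class_count n k S * risk k t\<bar> \<le> sqrt (n * prob (class_set k) * Lg)"
    using good_sample_event[OF T Lg0, where n=n] by blast
  have "2 * card T * exp (- Lg) = \<delta>" using N \<delta> by (simp add: Lg_def exp_minus)
  then have measure_E: "measure (samples n) E \<ge> 1 - CARD('k) * (\<delta> + exp (- p_min hat D * n / 8))"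
    using E(2) by simp
  have "risk k (a $ k) \<le> (INF t\<in>{am..ap}. risk k t) + calib_rate X \<delta> (p_min hat D) n"
    if S: "S \<in> E" and box: "\<forall>j. am \<le> a $ j \<and> a $ j \<le> ap"
      and amin: "\<forall>b::real^'k. (\<forall>j. am \<le> b $ j \<and> b $ j \<le> ap) \<longrightarrow>
             emp_calib_loss Lcal flgt hat n S a \<le> emp_calib_loss Lcal flgt hat n S b" for S a k
  proof -
    have "S \<in> space (samples n)" using S E(1) sets.sets_into_space by blast
    then have "risk k (a $ k) \<le> risk k t + calib_rate X \<delta> (p_min hat D) n" if "t \<in> {am..ap}" for t
      by (rule risk_of_empirical_minimiser_le_calib_rate[OF _ n box amin \<delta> p N net _ _ that])
        (use count[OF S] dev[OF S] in \<open>simp_all add: Lg_def\<close>)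
    then have "risk k (a $ k) - calib_rate X \<delta> (p_min hat D) n \<le> (INF t\<in>{am..ap}. risk k t)"
      using am_ap by (intro cINF_greatest) (auto simp: algebra_simps)
    then show ?thesis by simp
  qed
  then show ?thesis using E(1) measure_E unfolding X_def by blast
qed

end

theorem corollary1:
  fixes MX :: "'x measure" and D :: "('x \<times> 'k::finite) measure"
    and flgt :: "'x \<Rightarrow> real^'k" and hat :: "'x \<Rightarrow> 'k"
    and Lcal :: "real^'k \<Rightarrow> real^'k \<Rightarrow> real"
    and Lf Lc am ap \<delta> :: real and n :: nat
  assumes "prob_space D"
    and "sets D = sets (MX \<Otimes>\<^sub>M count_space UNIV)"
    and "flgt \<in> borel_measurable MX"
    and "hat \<in> MX \<rightarrow>\<^sub>M count_space UNIV"
    and "\<forall>x j. flgt x $ j \<le> flgt x $ hat x"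
    and "\<forall>x. norm (flgt x) \<le> Lf"
    and "\<forall>y u. 0 \<le> Lcal y u \<and> Lcal y u \<le> 1"
    and "\<forall>y u v. \<bar>Lcal y u - Lcal y v\<bar> \<le> Lc * norm (u - v)"
    and "am \<le> ap"
    and "0 < \<delta>" and "\<delta> < 1"
  shows "\<exists>E \<in> sets (PiM {..<n} (\<lambda>_. D)).
     measure (PiM {..<n} (\<lambda>_. D)) E
       \<ge> 1 - real CARD('k) * (\<delta> + exp (- p_min hat D * real n / 8)) \<and>
     (\<forall>S\<in>E. \<forall>a::real^'k.
        (\<forall>j. am \<le> a $ j \<and> a $ j \<le> ap) \<and>
        (\<forall>b::real^'k. (\<forall>j. am \<le> b $ j \<and> b $ j \<le> ap) \<longrightarrow>
             emp_calib_loss Lcal flgt hat n S a \<le> emp_calib_loss Lcal flgt hat n S b)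
        \<longrightarrow> (\<forall>k. cond_calib_loss Lcal flgt hat D k (a $ k)
                 \<le> (INF t\<in>{am..ap}. cond_calib_loss Lcal flgt hat D k t)
                   + 6 * sqrt (ln (1 + 4 * (ap - am) * sqrt (real n) * Lf * Lc) / (p_min hat D * real n))
                   + 12 * sqrt (ln (2 / \<delta>) / (p_min hat D * real n))))"
proof -
  interpret temperature_scaling MX D flgt hat Lcal Lf Lc
    by (rule temperature_scaling.intro[OF assms(1-4,6-8)])
  show ?thesis
  proof (cases "0 < p_min hat D \<and> 0 < n")
    case True
    then show ?thesis
      using excess_risk_le_calib_rate[OF assms(9-11)] by (simp add: calib_rate_def add.assoc)
  next
    case False
    then have trivial: "exp (- p_min hat D * n / 8) = 1" using p_min_nonneg by auto
    have "1 * 1 \<le> real CARD('k) * (\<delta> + 1)"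
      using assms(10) by (intro mult_mono) (auto simp: Suc_le_eq)
    then have "1 - CARD('k) * (\<delta> + exp (- p_min hat D * n / 8)) \<le> 0" unfolding trivial by simp
    then show ?thesis by (intro bexI[of _ "{}"]) auto
  qed
qed

end
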